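(* Let $p<q$ be positive integers, let $\boldsymbol\alpha\in\mathbb C^p$ be a unit vector, $\boldsymbol\beta=\mathrm{FT}_p(\boldsymbol\alpha)$ and $\boldsymbol\gamma=\mathrm{FT}_q(\boldsymbol\alpha)$. Let $S\subseteq[p]$ be nonempty and $r>1/100$. If $\|\boldsymbol\beta_S\|_2^2=c$ and $$q\geq\left(\frac{6400\,r\ln p\,\sqrt{\ln\frac{c}{|S|\,100r}}}{\sqrt{c\,\ln\!\left(1-\frac{1}{100r}\right)}}\right)p,$$ then $$\|\boldsymbol\gamma_{S'}\|_2^2\geq\frac{p}{q}\left(1-\frac1r\right)c .$$
   Context: Write $[N]=\{0,\dots,N-1\}$ and $\omega_N=e^{2\pi i/N}$. For $N\ge p$, $\mathrm{FT}_N(\boldsymbol\alpha)=\sum_{c=0}^{N-1}\left(\frac{1}{\sqrt N}\sum_{i=0}^{p-1}\omega_N^{ic}\alpha_i\right)|c\rangle\in\mathbb C^N$. Write $\boldsymbol\beta=(\beta_i)_{i\in[p]}$, $\boldsymbol\gamma=(\gamma_i)_{i\in[q]}$. For $i\in[p]$, $i'=\lfloor\frac qp i\rfloor$, and $S'=\{s':s\in S\}\subseteq[q]$. For a vector $\boldsymbol\zeta$ and an index set $T$, $\boldsymbol\zeta_T$ is the vector agreeing with $\boldsymbol\zeta$ on indices in $T$ and zero elsewhere. $\|\cdot\|_2$ is the Euclidean norm. *)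

theory Defs
  imports "HOL-Analysis.Analysis"
begin

definition omega :: "nat \<Rightarrow> complex" where
  "omega N = cis (2 * pi / real N)"

text \<open>FT_N(alpha) for alpha in C^p (given as a function on [p]); the result is the
  vector in C^N whose c-th coordinate (c < N) is given below.\<close>
definition FT :: "nat \<Rightarrow> nat \<Rightarrow> (nat \<Rightarrow> complex) \<Rightarrow> nat \<Rightarrow> complex" where
  "FT N p \<alpha> c = (1 / sqrt (real N)) * (\<Sum>i<p. omega N ^ (i * c) * \<alpha> i)"

definition prime_idx :: "nat \<Rightarrow> nat \<Rightarrow> nat \<Rightarrow> nat" where
  "prime_idx p q i = nat \<lfloor>real q / real p * real i\<rfloor>"

definition restr_norm2 :: "(nat \<Rightarrow> complex) \<Rightarrow> nat set \<Rightarrow> real" where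
  "restr_norm2 \<zeta> T = (\<Sum>t\<in>T. (cmod (\<zeta> t))\<^sup>2)"

end

theory Submission
  imports Defs "HOL-Library.Real_Mod"
begin

text \<open>
  Write theta_i = i'/q - i/p, so that |theta_i| <= 1/q and
  gamma_i' - sqrt(p/q) beta_i = q^(-1/2) sum_j omega_p^(ij) alpha_j (exp(2 pi I j theta_i) - 1).
  Expanding exp(2 pi I j theta_i) - 1 as a Taylor polynomial of order p, the k-th term is
  (2 pi I theta_i)^k / k! times sqrt(p/q) FT_p(j^k alpha)_i, and by Parseval the l2-norm of
  FT_p(j^k alpha) is at most (p - 1)^k. With x = 2 pi (p - 1)/q <= 1/2 the terms sum to at most
  2x sqrt(p/q) and the remainder is at most x sqrt(p/q), so gamma_S' is within 3x sqrt(p/q) of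
  sqrt(p/q) beta_S. The hypothesis on q forces x <= sqrt c/(6r), hence
  |gamma_S'| >= sqrt(p/q) sqrt c (1 - 1/(2r)), and (1 - 1/(2r))^2 >= 1 - 1/r.
\<close>

lemma omega_power: "omega N ^ n = cis (2 * pi * real n / real N)"
  unfolding omega_def Complex.DeMoivre by (simp add: field_simps)

lemma FT_eq_cis_sum:
  "FT N p a c = complex_of_real (1 / sqrt (real N)) * (\<Sum>j<p. cis (2 * pi * real j * real c / real N) * a j)"
  unfolding FT_def omega_power by (simp add: mult.assoc)

lemma sum_cis_multiple_eq_0:
  fixes m :: int
  assumes "0 < p" and "\<not> int p dvd m"
  shows "(\<Sum>i<p. cis (2 * pi * real i * of_int m / real p)) = 0"
proof -
  define z where "z = cis (2 * pi * of_int m / real p)"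
  have powers: "cis (2 * pi * real i * of_int m / real p) = z ^ i" for i
    unfolding z_def Complex.DeMoivre by (simp add: field_simps)
  have "z ^ p = 1"
    unfolding z_def Complex.DeMoivre cis_eq_1_iff using assms(1)
    by (intro exI[of _ m]) (simp add: field_simps)
  moreover have "z \<noteq> 1"
  proof
    assume "z = 1"
    then obtain n :: int where "2 * pi * of_int m / real p = of_int n * (2 * pi)"
      unfolding z_def cis_eq_1_iff by blast
    then have "of_int m = (of_int (int p * n) :: real)"
      using assms(1) by (simp add: field_simps)
    then show False
      using assms(2) by (metis dvd_triv_left of_int_eq_iff)
  qed
  ultimately show ?thesis
    unfolding powers using geometric_sum[of z p] by simp
qed

lemma sum_cis_orthogonal:
  assumes "j < p" and "l < p"
  shows "(\<Sum>i<p. cis (2 * pi * real i * (real j - real l) / real p)) = (if j = l then of_nat p else 0)"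
proof (cases "j = l")
  case False
  have "\<not> int p dvd int j - int l"
  proof
    assume "int p dvd int j - int l"
    then have "\<bar>int p\<bar> \<le> \<bar>int j - int l\<bar>"
      using False by (intro dvd_imp_le_int) auto
    with assms show False by linarith
  qed
  then show ?thesis
    using sum_cis_multiple_eq_0[of p "int j - int l"] assms False by simp
qed simp

lemma FT_mult_cnj_FT:
  "FT p p a i * cnj (FT p p b i) = complex_of_real (1 / real p) *
     (\<Sum>j<p. \<Sum>l<p. a j * cnj (b l) * cis (2 * pi * real i * (real j - real l) / real p))"
proof -
  define w where "w j = cis (2 * pi * real j * real i / real p)" for j
  have "w j * cnj (w l) = cis (2 * pi * real i * (real j - real l) / real p)" for j l
    unfolding w_def by (simp add: cis_cnj cis_mult algebra_simps diff_divide_distrib)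
  moreover have "complex_of_real (1 / sqrt (real p)) * complex_of_real (1 / sqrt (real p)) = complex_of_real (1 / real p)"
    by (simp flip: of_real_mult)
  moreover have "FT p p a i * cnj (FT p p b i) = complex_of_real (1 / sqrt (real p)) * complex_of_real (1 / sqrt (real p)) *
      ((\<Sum>j<p. w j * a j) * (\<Sum>l<p. cnj (w l) * cnj (b l)))"
    unfolding FT_eq_cis_sum w_def complex_cnj_mult cnj_sum by (simp add: mult_ac)
  ultimately show ?thesis
    unfolding sum_product by (simp add: mult_ac)
qed

lemma sum_norm_FT_square:
  assumes "0 < p"
  shows "(\<Sum>i<p. (cmod (FT p p a i))\<^sup>2) = (\<Sum>j<p. (cmod (a j))\<^sup>2)"
proof -
  define e where "e i j l = cis (2 * pi * real i * (real j - real l) / real p)" for i j l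
  have "complex_of_real (\<Sum>i<p. (cmod (FT p p a i))\<^sup>2) = (\<Sum>i<p. FT p p a i * cnj (FT p p a i))"
    by (simp only: of_real_sum complex_norm_square)
  also have "\<dots> = complex_of_real (1 / real p) * (\<Sum>i<p. \<Sum>j<p. \<Sum>l<p. a j * cnj (a l) * e i j l)"
    unfolding FT_mult_cnj_FT e_def by (simp only: sum_distrib_left)
  also have "(\<Sum>i<p. \<Sum>j<p. \<Sum>l<p. a j * cnj (a l) * e i j l) = (\<Sum>j<p. \<Sum>l<p. \<Sum>i<p. a j * cnj (a l) * e i j l)"
    by (rule trans[OF sum.swap sum.cong[OF refl sum.swap]])
  also have "\<dots> = (\<Sum>j<p. of_nat p * (a j * cnj (a j)))"
  proof (rule sum.cong[OF refl])
    fix j assume "j \<in> {..<p}"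
    have "(\<Sum>i<p. a j * cnj (a l) * e i j l) = (if j = l then of_nat p * (a j * cnj (a j)) else 0)" if "l < p" for l
      using \<open>j \<in> {..<p}\<close> that by (simp add: e_def sum_cis_orthogonal flip: sum_distrib_left)
    then show "(\<Sum>l<p. \<Sum>i<p. a j * cnj (a l) * e i j l) = of_nat p * (a j * cnj (a j))"
      using \<open>j \<in> {..<p}\<close> by (simp add: sum.delta)
  qed
  also have "complex_of_real (1 / real p) * \<dots> = (\<Sum>j<p. a j * cnj (a j))"
    using assms by (simp add: sum_distrib_left)
  also have "\<dots> = complex_of_real (\<Sum>j<p. (cmod (a j))\<^sup>2)"
    by (simp only: of_real_sum complex_norm_square)
  finally show ?thesis
    using of_real_eq_iff by blast
qed

lemma restr_norm2_FT_le:
  assumes "0 < p" and "S \<subseteq> {..<p}"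
  shows "restr_norm2 (FT p p a) S \<le> (\<Sum>j<p. (cmod (a j))\<^sup>2)"
proof -
  have "restr_norm2 (FT p p a) S \<le> (\<Sum>i<p. (cmod (FT p p a i))\<^sup>2)"
    unfolding restr_norm2_def using assms(2) by (intro sum_mono2) auto
  then show ?thesis
    using sum_norm_FT_square[OF assms(1)] by simp
qed

lemma L2_set_norm_add_le:
  fixes f g :: "'a \<Rightarrow> 'b::real_normed_vector"
  shows "L2_set (\<lambda>i. norm (f i + g i)) A \<le> L2_set (\<lambda>i. norm (f i)) A + L2_set (\<lambda>i. norm (g i)) A"
  by (rule order_trans[OF L2_set_mono L2_set_triangle_ineq]) (auto intro: norm_triangle_ineq)

lemma L2_set_norm_sum_le:
  fixes f :: "'k \<Rightarrow> 'a \<Rightarrow> 'b::real_normed_vector"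
  assumes "finite K"
  shows "L2_set (\<lambda>i. norm (\<Sum>k\<in>K. f k i)) A \<le> (\<Sum>k\<in>K. L2_set (\<lambda>i. norm (f k i)) A)"
  using assms
proof (induction K rule: finite_induct)
  case empty
  then show ?case by (simp add: L2_set_def)
next
  case (insert k K)
  then show ?case
    using L2_set_norm_add_le[of "f k" "\<lambda>i. \<Sum>k\<in>K. f k i" A] by simp
qed

lemma L2_set_mono_set:
  assumes "A \<subseteq> B" and "finite B"
  shows "L2_set f A \<le> L2_set f B"
  unfolding L2_set_def using assms by (intro real_sqrt_le_mono sum_mono2) auto

lemma L2_set_FT_moment_le:
  assumes "0 < p"
  shows "L2_set (\<lambda>i. cmod (FT p p (\<lambda>j. of_nat j ^ k * a j) i)) {..<p}
           \<le> (real p - 1) ^ k * L2_set (\<lambda>j. cmod (a j)) {..<p}"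
proof -
  have "L2_set (\<lambda>i. cmod (FT p p (\<lambda>j. of_nat j ^ k * a j) i)) {..<p}
      = L2_set (\<lambda>j. real j ^ k * cmod (a j)) {..<p}"
    unfolding L2_set_def sum_norm_FT_square[OF assms] by (simp add: norm_mult norm_power)
  also have "\<dots> \<le> L2_set (\<lambda>j. (real p - 1) ^ k * cmod (a j)) {..<p}"
  proof (rule L2_set_mono)
    fix j assume "j \<in> {..<p}"
    then have "real j ^ k \<le> (real p - 1) ^ k"
      by (intro power_mono) auto
    then show "real j ^ k * cmod (a j) \<le> (real p - 1) ^ k * cmod (a j)"
      by (rule mult_right_mono) simp
  qed simp
  also have "\<dots> = (real p - 1) ^ k * L2_set (\<lambda>j. cmod (a j)) {..<p}"
    using assms by (simp add: L2_set_right_distrib)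
  finally show ?thesis .
qed

lemma norm_cis_minus_Taylor_le:
  "cmod (cis y - (\<Sum>k\<le>K. (\<i> * of_real y) ^ k / fact k)) \<le> \<bar>y\<bar> ^ Suc K / fact K"
  using Taylor_exp[of "\<i> * of_real y" K] by (simp add: cis_conv_exp norm_mult)

lemma sum_cis_shift_Taylor:
  "(\<Sum>j<p. (cis (a j + b j) - cis (a j)) * \<alpha> j) =
     (\<Sum>k<K. \<Sum>j<p. cis (a j) * \<alpha> j * ((\<i> * of_real (b j)) ^ Suc k / fact (Suc k)))
     + (\<Sum>j<p. cis (a j) * \<alpha> j * (cis (b j) - (\<Sum>k\<le>K. (\<i> * of_real (b j)) ^ k / fact k)))"
proof -
  have Taylor: "cis (b j) - 1 = (\<Sum>k<K. (\<i> * of_real (b j)) ^ Suc k / fact (Suc k))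
      + (cis (b j) - (\<Sum>k\<le>K. (\<i> * of_real (b j)) ^ k / fact k))" for j
    by (simp add: sum.atMost_shift)
  have "(cis (a j + b j) - cis (a j)) * \<alpha> j =
      (\<Sum>k<K. cis (a j) * \<alpha> j * ((\<i> * of_real (b j)) ^ Suc k / fact (Suc k)))
      + cis (a j) * \<alpha> j * (cis (b j) - (\<Sum>k\<le>K. (\<i> * of_real (b j)) ^ k / fact k))" for j
  proof -
    have "(cis (a j + b j) - cis (a j)) * \<alpha> j = cis (a j) * \<alpha> j * (cis (b j) - 1)"
      by (simp add: cis_mult [symmetric] algebra_simps)
    then show ?thesis
      unfolding Taylor by (simp only: distrib_left sum_distrib_left)
  qed
  then show ?thesis
    by (simp add: sum.distrib sum.swap[of _ "{..<p}" "{..<K}"])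
qed

lemma sum_cis_moment_eq_FT:
  assumes "0 < p"
  shows "(\<Sum>j<p. cis (2 * pi * real j * real i / real p) * \<alpha> j * ((\<i> * of_real (2 * pi * real j * \<theta>)) ^ n / fact n))
    = (\<i> * of_real (2 * pi * \<theta>)) ^ n / fact n * (of_real (sqrt (real p)) * FT p p (\<lambda>j. of_nat j ^ n * \<alpha> j) i)"
proof -
  have "of_real (sqrt (real p)) * of_real (1 / sqrt (real p)) = (1 :: complex)"
    using assms by (simp flip: of_real_mult)
  then show ?thesis
    unfolding FT_eq_cis_sum mult.assoc[symmetric]
    by (simp add: sum_distrib_left sum_divide_distrib power_mult_distrib mult_ac)
qed

lemma L2_set_Taylor_term_le:
  assumes "0 < p" and "A \<subseteq> {..<p}" and "0 \<le> t" and "\<And>i. i \<in> A \<Longrightarrow> \<bar>\<theta> i\<bar> \<le> t"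
  shows "L2_set (\<lambda>i. cmod ((\<i> * of_real (2 * pi * \<theta> i)) ^ n / fact n *
            (of_real (sqrt (real p)) * FT p p (\<lambda>j. of_nat j ^ n * \<alpha> j) i))) A
         \<le> sqrt (real p) * (2 * pi * (real p - 1) * t) ^ n * L2_set (\<lambda>j. cmod (\<alpha> j)) {..<p}"
proof -
  define M where "M = sqrt (real p) * (2 * pi * t) ^ n"
  have "L2_set (\<lambda>i. cmod ((\<i> * of_real (2 * pi * \<theta> i)) ^ n / fact n *
            (of_real (sqrt (real p)) * FT p p (\<lambda>j. of_nat j ^ n * \<alpha> j) i))) A
      \<le> L2_set (\<lambda>i. M * cmod (FT p p (\<lambda>j. of_nat j ^ n * \<alpha> j) i)) A"
  proof (rule L2_set_mono)
    fix i assume "i \<in> A"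
    then have "(2 * pi * \<bar>\<theta> i\<bar>) ^ n \<le> (2 * pi * t) ^ n"
      using assms(4) by (intro power_mono) auto
    also have "\<dots> \<le> (2 * pi * t) ^ n * fact n"
      using mult_left_mono[OF fact_ge_1[of n], of "(2 * pi * t) ^ n"] assms(3) by simp
    finally have "(2 * pi * \<bar>\<theta> i\<bar>) ^ n / fact n \<le> (2 * pi * t) ^ n"
      by (simp add: pos_divide_le_eq)
    then have "(2 * pi * \<bar>\<theta> i\<bar>) ^ n / fact n * (sqrt (real p) * cmod (FT p p (\<lambda>j. of_nat j ^ n * \<alpha> j) i))
        \<le> (2 * pi * t) ^ n * (sqrt (real p) * cmod (FT p p (\<lambda>j. of_nat j ^ n * \<alpha> j) i))"
      by (rule mult_right_mono) simp
    then show "cmod ((\<i> * of_real (2 * pi * \<theta> i)) ^ n / fact n *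
            (of_real (sqrt (real p)) * FT p p (\<lambda>j. of_nat j ^ n * \<alpha> j) i))
        \<le> M * cmod (FT p p (\<lambda>j. of_nat j ^ n * \<alpha> j) i)"
      unfolding M_def by (simp add: norm_mult norm_divide norm_power abs_mult mult_ac)
  qed simp
  also have "\<dots> \<le> M * L2_set (\<lambda>i. cmod (FT p p (\<lambda>j. of_nat j ^ n * \<alpha> j) i)) {..<p}"
    using assms(2,3) unfolding M_def
    by (simp flip: L2_set_right_distrib) (intro mult_left_mono L2_set_mono_set, auto)
  also have "\<dots> \<le> M * ((real p - 1) ^ n * L2_set (\<lambda>j. cmod (\<alpha> j)) {..<p})"
    using assms(3) by (intro mult_left_mono L2_set_FT_moment_le assms(1)) (simp add: M_def)
  also have "\<dots> = sqrt (real p) * (2 * pi * (real p - 1) * t) ^ n * L2_set (\<lambda>j. cmod (\<alpha> j)) {..<p}"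
    unfolding M_def power_mult_distrib by (simp only: mult_ac)
  finally show ?thesis .
qed

lemma norm_Taylor_remainder_sum_le:
  assumes "\<And>j. j < p \<Longrightarrow> \<bar>b j\<bar> \<le> x" and "\<And>j. j < p \<Longrightarrow> cmod (\<alpha> j) \<le> N"
    and "0 \<le> N" and "0 \<le> x" and "x \<le> 1"
  shows "cmod (\<Sum>j<p. cis (a j) * \<alpha> j * (cis (b j) - (\<Sum>k\<le>p. (\<i> * of_real (b j)) ^ k / fact k))) \<le> N * x"
proof -
  have "cmod (\<Sum>j<p. cis (a j) * \<alpha> j * (cis (b j) - (\<Sum>k\<le>p. (\<i> * of_real (b j)) ^ k / fact k)))
      \<le> (\<Sum>j<p. N * (x ^ Suc p / fact p))"
  proof (rule order_trans[OF norm_sum sum_mono])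
    fix j assume "j \<in> {..<p}"
    then have "\<bar>b j\<bar> \<le> x" and "cmod (\<alpha> j) \<le> N"
      using assms(1,2) by auto
    moreover from this(1) have "\<bar>b j\<bar> ^ Suc p / fact p \<le> x ^ Suc p / fact p"
      by (intro divide_right_mono power_mono) auto
    ultimately show "cmod (cis (a j) * \<alpha> j * (cis (b j) - (\<Sum>k\<le>p. (\<i> * of_real (b j)) ^ k / fact k)))
        \<le> N * (x ^ Suc p / fact p)"
      unfolding norm_mult norm_cis mult_1_left
      by (intro mult_mono order_trans[OF norm_cis_minus_Taylor_le]) (use assms(3) in auto)
  qed
  also have "\<dots> = N * x * (real p * x ^ p / fact p)"
    by (simp add: mult_ac)
  also have "\<dots> \<le> N * x"
  proof -
    have "real p \<le> fact p"
      by (metis fact_ge_self of_nat_fact of_nat_le_iff)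
    then have "real p * x ^ p \<le> fact p * 1"
      using assms(4,5) by (intro mult_mono power_le_one) auto
    then have "real p * x ^ p / fact p \<le> 1"
      by (simp add: pos_divide_le_eq)
    then show ?thesis
      using assms(3,4) by (intro mult_left_le) auto
  qed
  finally show ?thesis .
qed

lemma L2_set_Taylor_remainder_le:
  assumes p: "0 < p" and A: "A \<subseteq> {..<p}" and \<theta>: "\<And>i. i \<in> A \<Longrightarrow> \<bar>\<theta> i\<bar> \<le> t"
    and small: "0 \<le> 2 * pi * (real p - 1) * t" "2 * pi * (real p - 1) * t \<le> 1"
  shows "L2_set (\<lambda>i. cmod (\<Sum>j<p. cis (2 * pi * real j * real i / real p) * \<alpha> j *
            (cis (2 * pi * real j * \<theta> i) - (\<Sum>k\<le>p. (\<i> * of_real (2 * pi * real j * \<theta> i)) ^ k / fact k)))) A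
    \<le> sqrt (real p) * (2 * pi * (real p - 1) * t) * L2_set (\<lambda>j. cmod (\<alpha> j)) {..<p}"
proof -
  define x where "x = 2 * pi * (real p - 1) * t"
  define N where "N = L2_set (\<lambda>j. cmod (\<alpha> j)) {..<p}"
  have "cmod (\<Sum>j<p. cis (2 * pi * real j * real i / real p) * \<alpha> j *
            (cis (2 * pi * real j * \<theta> i) - (\<Sum>k\<le>p. (\<i> * of_real (2 * pi * real j * \<theta> i)) ^ k / fact k)))
      \<le> N * x" if "i \<in> A" for i
  proof (rule norm_Taylor_remainder_sum_le)
    fix j assume "j < p"
    then have "2 * pi * real j * \<bar>\<theta> i\<bar> \<le> 2 * pi * (real p - 1) * t"
      using \<theta>[OF that] by (intro mult_mono) auto
    then show "\<bar>2 * pi * real j * \<theta> i\<bar> \<le> x"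
      by (simp add: x_def abs_mult)
    show "cmod (\<alpha> j) \<le> N"
      unfolding N_def using \<open>j < p\<close> by (intro member_le_L2_set) auto
  qed (use small in \<open>auto simp: N_def x_def\<close>)
  then have "L2_set (\<lambda>i. cmod (\<Sum>j<p. cis (2 * pi * real j * real i / real p) * \<alpha> j *
            (cis (2 * pi * real j * \<theta> i) - (\<Sum>k\<le>p. (\<i> * of_real (2 * pi * real j * \<theta> i)) ^ k / fact k)))) A
      \<le> L2_set (\<lambda>i. N * x) A"
    by (intro L2_set_mono) auto
  also have "\<dots> = sqrt (real (card A)) * (N * x)"
    using small by (simp add: L2_set_constant N_def x_def)
  also have "\<dots> \<le> sqrt (real p) * (N * x)"
    using small card_mono[OF _ A] by (intro mult_right_mono) (auto simp: N_def x_def)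
  finally show ?thesis
    unfolding N_def x_def by (simp only: mult_ac)
qed

lemma sum_power_Suc_le:
  fixes x :: real
  assumes "0 \<le> x" and "x \<le> 1/2"
  shows "(\<Sum>k<n. x ^ Suc k) \<le> 2 * x"
proof -
  have "(1 - x) * (\<Sum>k<n. x ^ Suc k) = x * (1 - x ^ n)"
    by (simp add: one_diff_power_eq sum_distrib_left mult_ac)
  also have "\<dots> \<le> x"
    using assms by (simp add: mult_left_le)
  finally have "(1 - x) * (\<Sum>k<n. x ^ Suc k) \<le> x" .
  moreover have "(1/2) * (\<Sum>k<n. x ^ Suc k) \<le> (1 - x) * (\<Sum>k<n. x ^ Suc k)"
    using assms by (intro mult_right_mono sum_nonneg) auto
  ultimately show ?thesis
    by linarith
qed

lemma L2_set_phase_perturbation_le: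
  fixes \<alpha> :: "nat \<Rightarrow> complex" and \<phi> :: "nat \<Rightarrow> real"
  assumes p: "0 < p" and A: "A \<subseteq> {..<p}" and t: "0 \<le> t"
    and \<phi>: "\<And>i. i \<in> A \<Longrightarrow> \<bar>\<phi> i - real i / real p\<bar> \<le> t"
    and small: "2 * pi * (real p - 1) * t \<le> 1/2"
  shows "L2_set (\<lambda>i. cmod (\<Sum>j<p. (cis (2 * pi * real j * \<phi> i) - cis (2 * pi * real j * real i / real p)) * \<alpha> j)) A
    \<le> 3 * (2 * pi * (real p - 1) * t) * sqrt (real p) * L2_set (\<lambda>j. cmod (\<alpha> j)) {..<p}"
proof -
  define x where "x = 2 * pi * (real p - 1) * t"
  define N where "N = L2_set (\<lambda>j. cmod (\<alpha> j)) {..<p}"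
  define \<theta> where "\<theta> i = \<phi> i - real i / real p" for i
  define T where "T k i = (\<i> * of_real (2 * pi * \<theta> i)) ^ Suc k / fact (Suc k) *
      (of_real (sqrt (real p)) * FT p p (\<lambda>j. of_nat j ^ Suc k * \<alpha> j) i)" for k i
  define E where "E i = (\<Sum>j<p. cis (2 * pi * real j * real i / real p) * \<alpha> j *
      (cis (2 * pi * real j * \<theta> i) - (\<Sum>k\<le>p. (\<i> * of_real (2 * pi * real j * \<theta> i)) ^ k / fact k)))" for i
  have x: "0 \<le> x" "x \<le> 1/2"
    using p t small by (simp_all add: x_def)
  have split: "(\<Sum>j<p. (cis (2 * pi * real j * \<phi> i) - cis (2 * pi * real j * real i / real p)) * \<alpha> j)
      = (\<Sum>k<p. T k i) + E i" for i
  proof -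
    have "2 * pi * real j * \<phi> i = 2 * pi * real j * real i / real p + 2 * pi * real j * \<theta> i" for j
      by (simp add: \<theta>_def algebra_simps)
    then show ?thesis
      using sum_cis_shift_Taylor[where a = "\<lambda>j. 2 * pi * real j * real i / real p"
          and b = "\<lambda>j. 2 * pi * real j * \<theta> i" and \<alpha> = \<alpha> and p = p and K = p]
      unfolding T_def E_def sum_cis_moment_eq_FT[OF p] by simp
  qed
  have \<theta>_le: "\<bar>\<theta> i\<bar> \<le> t" if "i \<in> A" for i
    using \<phi>[OF that] by (simp add: \<theta>_def)
  have T_le: "L2_set (\<lambda>i. cmod (T k i)) A \<le> sqrt (real p) * N * x ^ Suc k" for k
    using L2_set_Taylor_term_le[where \<theta> = \<theta> and n = "Suc k" and \<alpha> = \<alpha>, OF p A t \<theta>_le]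
    unfolding T_def N_def x_def by (simp only: mult_ac)
  have "0 \<le> 2 * pi * (real p - 1) * t" "2 * pi * (real p - 1) * t \<le> 1"
    using x by (simp_all add: x_def)
  then have E_le: "L2_set (\<lambda>i. cmod (E i)) A \<le> sqrt (real p) * N * x"
    using L2_set_Taylor_remainder_le[where \<theta> = \<theta> and \<alpha> = \<alpha>, OF p A \<theta>_le]
    unfolding E_def N_def x_def by (simp only: mult_ac)
  have "L2_set (\<lambda>i. cmod (\<Sum>j<p. (cis (2 * pi * real j * \<phi> i) - cis (2 * pi * real j * real i / real p)) * \<alpha> j)) A
      \<le> (\<Sum>k<p. L2_set (\<lambda>i. cmod (T k i)) A) + L2_set (\<lambda>i. cmod (E i)) A"
    unfolding split by (intro order_trans[OF L2_set_norm_add_le] add_mono L2_set_norm_sum_le) simp_all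
  also have "\<dots> \<le> sqrt (real p) * N * (\<Sum>k<p. x ^ Suc k) + sqrt (real p) * N * x"
    unfolding sum_distrib_left by (intro add_mono sum_mono T_le E_le)
  also have "\<dots> \<le> sqrt (real p) * N * (2 * x) + sqrt (real p) * N * x"
    using x by (intro add_mono mult_left_mono sum_power_Suc_le) (simp_all add: N_def)
  finally show ?thesis
    by (simp add: x_def N_def algebra_simps)
qed

lemma prime_idx_approx:
  assumes "0 < p" and "0 < q"
  shows "\<bar>real (prime_idx p q i) / real q - real i / real p\<bar> \<le> 1 / real q"
proof -
  define y where "y = real q / real p * real i"
  have "real (prime_idx p q i) / real q - real i / real p = (of_int \<lfloor>y\<rfloor> - y) / real q"
    using assms by (simp add: prime_idx_def y_def diff_divide_distrib)
  moreover have "\<bar>of_int \<lfloor>y\<rfloor> - y\<bar> \<le> 1"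
    by linarith
  ultimately show ?thesis
    using assms by (simp add: divide_right_mono)
qed

lemma strict_mono_prime_idx:
  assumes "0 < p" and "p \<le> q"
  shows "strict_mono (prime_idx p q)"
proof (rule strict_monoI)
  fix i j :: nat
  assume "i < j"
  have "1 * 1 \<le> real q / real p * (real j - real i)"
    using assms \<open>i < j\<close> by (intro mult_mono) auto
  then have "\<lfloor>real q / real p * real i\<rfloor> + 1 \<le> \<lfloor>real q / real p * real j\<rfloor>"
    by (metis floor_add_int floor_mono of_int_1 le_diff_eq right_diff_distrib mult_1 add.commute)
  then have "\<lfloor>real q / real p * real i\<rfloor> < \<lfloor>real q / real p * real j\<rfloor>"
    by linarith
  moreover have "0 \<le> \<lfloor>real q / real p * real i\<rfloor>"
    by simp
  ultimately show "prime_idx p q i < prime_idx p q j"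
    unfolding prime_idx_def by (subst nat_less_eq_zless)
qed

lemma restr_norm2_image_prime_idx:
  assumes "0 < p" and "p \<le> q"
  shows "restr_norm2 \<zeta> (prime_idx p q ` S) = restr_norm2 (\<lambda>i. \<zeta> (prime_idx p q i)) S"
  using strict_mono_imp_inj_on[OF strict_mono_prime_idx[OF assms]]
  by (simp add: restr_norm2_def sum.reindex)

lemma L2_set_FT_prime_idx_diff_le:
  fixes \<alpha> :: "nat \<Rightarrow> complex"
  assumes p: "0 < p" and pq: "p \<le> q" and A: "A \<subseteq> {..<p}"
    and small: "2 * pi * (real p - 1) / real q \<le> 1/2"
  shows "L2_set (\<lambda>i. cmod (FT q p \<alpha> (prime_idx p q i) - of_real (sqrt (real p / real q)) * FT p p \<alpha> i)) A
    \<le> 3 * (2 * pi * (real p - 1) / real q) * sqrt (real p / real q) * L2_set (\<lambda>j. cmod (\<alpha> j)) {..<p}"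
proof -
  have q: "0 < q"
    using p pq by simp
  have "FT q p \<alpha> (prime_idx p q i) - of_real (sqrt (real p / real q)) * FT p p \<alpha> i
      = of_real (1 / sqrt (real q)) * (\<Sum>j<p. (cis (2 * pi * real j * (real (prime_idx p q i) / real q))
          - cis (2 * pi * real j * real i / real p)) * \<alpha> j)" for i
  proof -
    have "sqrt (real p / real q) * (1 / sqrt (real p)) = 1 / sqrt (real q)"
      using p by (simp add: real_sqrt_divide)
    then have "of_real (sqrt (real p / real q)) * of_real (1 / sqrt (real p)) = (of_real (1 / sqrt (real q)) :: complex)"
      by (simp only: flip: of_real_mult)
    then show ?thesis
      unfolding FT_eq_cis_sum mult.assoc[symmetric]
      by (simp add: right_diff_distrib sum_subtractf sum_distrib_left left_diff_distrib mult_ac)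
  qed
  then have "L2_set (\<lambda>i. cmod (FT q p \<alpha> (prime_idx p q i) - of_real (sqrt (real p / real q)) * FT p p \<alpha> i)) A
      = 1 / sqrt (real q) * L2_set (\<lambda>i. cmod (\<Sum>j<p. (cis (2 * pi * real j * (real (prime_idx p q i) / real q))
          - cis (2 * pi * real j * real i / real p)) * \<alpha> j)) A"
    by (simp only: norm_mult norm_of_real abs_of_nonneg[of "1 / sqrt (real q)"] real_sqrt_ge_zero
        of_nat_0_le_iff divide_nonneg_nonneg zero_le_one flip: L2_set_right_distrib)
  also have "\<dots> \<le> 1 / sqrt (real q) * (3 * (2 * pi * (real p - 1) * (1 / real q)) * sqrt (real p)
      * L2_set (\<lambda>j. cmod (\<alpha> j)) {..<p})"
    using small prime_idx_approx[OF p q]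
    by (intro mult_left_mono L2_set_phase_perturbation_le[OF p A]) auto
  finally show ?thesis
    by (simp add: real_sqrt_divide mult_ac)
qed

lemma oversampling_factor_ge:
  fixes c r :: real and n p :: nat
  assumes c: "0 < c" "c \<le> 1" and r: "1 < r" and n: "1 \<le> n" and p: "2 \<le> p"
  shows "1600 * r / sqrt c \<le> 6400 * r * ln (real p) * sqrt (ln (c / (real n * 100 * r)))
            / sqrt (c * ln (1 - 1 / (100 * r)))"
proof -
  txt \<open>Both logarithms are negative and \<open>sqrt\<close> is odd (\<open>sqrt (- x) = - sqrt x\<close>), so the
    quotient of the two square roots is the positive number \<open>sqrt (- L1) / sqrt (- (c * L2))\<close>.\<close>
  define L1 where "L1 = ln (c / (real n * 100 * r))"
  define L2 where "L2 = ln (1 - 1 / (100 * r))"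
  have "1 * 1 \<le> real n * r"
    using n r by (intro mult_mono) auto
  then have "c / (real n * 100 * r) \<le> 1 / 100"
    using c by (simp add: divide_simps)
  moreover have "0 < c / (real n * 100 * r)"
    using c r n by simp
  ultimately have L1_le: "L1 \<le> - 1/4"
    using ln_le_minus_one[of "c / (real n * 100 * r)"] unfolding L1_def by linarith
  then have L1: "1/2 \<le> sqrt (- L1)"
    by (intro real_le_rsqrt) (simp add: power2_eq_square)
  have u: "0 < 1 / (100 * r)" "1 / (100 * r) \<le> 1 / 100"
    using r by (auto simp: divide_simps)
  then have "1 / (100 * r) * (1 / (100 * r)) \<le> 1 / (100 * r) * 1"
    by (intro mult_left_mono) auto
  then have "- 1 \<le> L2"
    using ln_one_minus_pos_lower_bound[of "1 / (100 * r)"] u unfolding L2_def power2_eq_square by linarith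
  moreover have "L2 < 0"
    using u unfolding L2_def by simp
  moreover from calculation have "c * (- L2) \<le> c * 1"
    using c by (intro mult_left_mono) auto
  ultimately have L2: "0 < sqrt (- (c * L2))" "sqrt (- (c * L2)) \<le> sqrt c"
    using c by (auto simp: mult_pos_neg)
  have "ln 2 \<le> ln (real p)"
    using p by simp
  then have ln_p: "1/2 \<le> ln (real p)"
    using ln2_ge_two_thirds by linarith
  have "(1/2) / sqrt c \<le> sqrt (- L1) / sqrt (- (c * L2))"
    using L1 L1_le L2 by (intro frac_le) auto
  then have "6400 * r * (1/2) * ((1/2) / sqrt c) \<le> 6400 * r * ln (real p) * (sqrt (- L1) / sqrt (- (c * L2)))"
    using r c ln_p by (intro mult_mono) auto
  then show ?thesis
    unfolding L1_def L2_def real_sqrt_minus by simp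
qed

lemma phase_spread_le:
  fixes c r :: real and n :: nat
  assumes p: "0 < p" and q: "0 < q" and c: "0 < c" "c \<le> 1" and r: "1 < r" and n: "1 \<le> n"
    and hyp: "real q \<ge> (6400 * r * ln (real p) * sqrt (ln (c / (real n * 100 * r)))
                   / sqrt (c * ln (1 - 1 / (100 * r)))) * real p"
  shows "2 * pi * (real p - 1) / real q \<le> sqrt c / (6 * r)"
proof (cases "p = 1")
  case False
  then have "2 \<le> p"
    using p by simp
  then have "1600 * r / sqrt c * real p \<le> real q"
    using hyp oversampling_factor_ge[OF c r n] by (meson mult_right_mono of_nat_0_le_iff order_trans)
  then have "1600 * r * real p \<le> sqrt c * real q"
    using c by (simp add: divide_simps mult_ac)
  moreover have "2 * pi * (real p - 1) * (6 * r) \<le> 1600 * r * real p"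
  proof -
    have "2 * pi * (real p - 1) * (6 * r) = 12 * (pi * ((real p - 1) * r))"
      by (simp add: algebra_simps)
    also have "\<dots> \<le> 12 * (4 * ((real p - 1) * r))"
      using pi_less_4 r p by (intro mult_left_mono mult_right_mono) auto
    also have "\<dots> \<le> 1600 * r * real p"
      using r by (simp add: algebra_simps)
    finally show ?thesis .
  qed
  ultimately have "2 * pi * (real p - 1) * (6 * r) \<le> sqrt c * real q"
    by linarith
  then show ?thesis
    using q r by (simp add: field_simps)
qed (use c r in simp)

lemma restr_norm2_lower_bound:
  assumes diff: "L2_set (\<lambda>i. cmod (g i - of_real s * f i)) S \<le> s * sqrt (restr_norm2 f S) / (2 * r)"
    and s: "0 \<le> s" and r: "1 < r"
  shows "s\<^sup>2 * (1 - 1 / r) * restr_norm2 f S \<le> restr_norm2 g S"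
proof -
  define N where "N = L2_set (\<lambda>i. cmod (f i)) S"
  have norm2: "restr_norm2 h S = (L2_set (\<lambda>i. cmod (h i)) S)\<^sup>2" for h :: "nat \<Rightarrow> complex"
    unfolding restr_norm2_def L2_set_def by (simp add: sum_nonneg)
  have "L2_set (\<lambda>i. cmod (of_real s * f i)) S = s * N"
    using s by (simp add: N_def norm_mult L2_set_right_distrib)
  moreover have "L2_set (\<lambda>i. cmod (of_real s * f i)) S
      \<le> L2_set (\<lambda>i. cmod (g i)) S + L2_set (\<lambda>i. cmod (of_real s * f i - g i)) S"
    using L2_set_norm_add_le[of g "\<lambda>i. of_real s * f i - g i" S] by simp
  moreover have "sqrt (restr_norm2 f S) = N"
    unfolding norm2 N_def by simp
  ultimately have "s * N * (1 - 1 / (2 * r)) \<le> L2_set (\<lambda>i. cmod (g i)) S"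
    using diff by (simp add: norm_minus_commute algebra_simps)
  moreover have "0 \<le> s * N * (1 - 1 / (2 * r))"
    using s r by (intro mult_nonneg_nonneg) (auto simp: N_def field_simps)
  ultimately have "(s * N * (1 - 1 / (2 * r)))\<^sup>2 \<le> restr_norm2 g S"
    unfolding norm2 by (rule power_mono)
  moreover have "1 - 1 / r \<le> (1 - 1 / (2 * r))\<^sup>2"
    using r by (simp add: power2_eq_square field_simps)
  then have "s\<^sup>2 * N\<^sup>2 * (1 - 1 / r) \<le> s\<^sup>2 * N\<^sup>2 * (1 - 1 / (2 * r))\<^sup>2"
    by (intro mult_left_mono) auto
  then have "s\<^sup>2 * (1 - 1 / r) * N\<^sup>2 \<le> (s * N * (1 - 1 / (2 * r)))\<^sup>2"
    by (simp add: power_mult_distrib mult_ac)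
  ultimately show ?thesis
    unfolding norm2 N_def by linarith
qed

theorem lemma3:
  fixes p q :: nat and \<alpha> :: "nat \<Rightarrow> complex" and S :: "nat set" and r c :: real
  assumes "0 < p" and "p < q"
    and "(\<Sum>i<p. (cmod (\<alpha> i))\<^sup>2) = 1"
    and "S \<subseteq> {..<p}" and "S \<noteq> {}"
    and "r > 1 / 100"
    and "restr_norm2 (FT p p \<alpha>) S = c"
    and "real q \<ge> (6400 * r * ln (real p) * sqrt (ln (c / (real (card S) * 100 * r)))
                   / sqrt (c * ln (1 - 1 / (100 * r)))) * real p"
  shows "restr_norm2 (FT q p \<alpha>) (prime_idx p q ` S) \<ge> real p / real q * (1 - 1 / r) * c"
proof -
  have c: "0 \<le> c" "c \<le> 1"
    using restr_norm2_FT_le[OF assms(1,4), of \<alpha>] assms(3,7) by (auto simp: restr_norm2_def sum_nonneg)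
  show ?thesis
  proof (cases "1 < r \<and> 0 < c")
    case False
    then have nonpos: "(1 - 1 / r) * c \<le> 0"
      using c assms(6) by (cases "c = 0") (auto intro!: mult_nonpos_nonneg simp: le_divide_eq_1)
    show ?thesis
      using mult_nonneg_nonpos[OF _ nonpos, of "real p / real q"] unfolding restr_norm2_def
      by (simp add: sum_nonneg mult.assoc order_trans)
  next
    case True
    define s where "s = sqrt (real p / real q)"
    define x where "x = 2 * pi * (real p - 1) / real q"
    have x: "x \<le> sqrt c / (6 * r)"
      unfolding x_def using assms(1,2,4,5,8) True c finite_subset[OF assms(4)]
      by (intro phase_spread_le[where n = "card S"]) (auto simp: Suc_le_eq card_gt_0_iff)
    have "sqrt c / (6 * r) \<le> 1 / (6 * 1)"
      using True c by (intro frac_le) auto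
    then have "x \<le> 1/2"
      using x by linarith
    then have "L2_set (\<lambda>i. cmod (FT q p \<alpha> (prime_idx p q i) - of_real s * FT p p \<alpha> i)) S
        \<le> 3 * x * s * L2_set (\<lambda>j. cmod (\<alpha> j)) {..<p}"
      unfolding s_def x_def using assms(2) by (intro L2_set_FT_prime_idx_diff_le assms(1,4)) auto
    also have "\<dots> = 3 * x * s"
      using assms(3) by (simp add: L2_set_def)
    also have "\<dots> \<le> 3 * (sqrt c / (6 * r)) * s"
      using x by (intro mult_right_mono mult_left_mono) (auto simp: s_def)
    finally have "L2_set (\<lambda>i. cmod (FT q p \<alpha> (prime_idx p q i) - of_real s * FT p p \<alpha> i)) S
        \<le> s * sqrt (restr_norm2 (FT p p \<alpha>) S) / (2 * r)"
      unfolding assms(7) by (simp add: mult.commute)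
    then have "s\<^sup>2 * (1 - 1 / r) * c \<le> restr_norm2 (\<lambda>i. FT q p \<alpha> (prime_idx p q i)) S"
      using True unfolding assms(7)[symmetric] by (intro restr_norm2_lower_bound) (auto simp: s_def)
    then show ?thesis
      using assms(1,2) by (simp add: restr_norm2_image_prime_idx s_def)
  qed
qed

end
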